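(* Let $\mathcal{A}$ be a pOC with state set $Q$ and let $p,q\in Q$. If $\mathrm{Pre}^*(q(0))\cap\mathrm{Post}^*(p(1))$ is finite, then $$|\mathrm{Pre}^*(q(0))\cap\mathrm{Post}^*(p(1))|\le|Q|^2\cdot(|Q|+2).$$
   Context: A pOC is $\mathcal{A}=(Q,\delta^{=0},\delta^{>0},P^{=0},P^{>0})$ with the following components. - $\delta^{>0}\subseteq Q\times\{-1,0,1\}\times Q$ are the positive rules and $\delta^{=0}\subseteq Q\times\{0,1\}\times Q$ are the zero rules. Every state has both kinds of outgoing rule. - $P^{>0}$ and $P^{=0}$ are positive probability distributions over the outgoing rules of each state. The Markov chain $\mathcal{M}_\mathcal{A}$ on configurations $p(i)\in Q\times\mathbb{N}_0$ has the following transitions: - $p(0)\to q(c)$ iff $(p,c,q)\in\delta^{=0}$; - for $i\ge1$, $p(i)\to q(i+c)$ iff $(p,c,q)\in\delta^{>0}$. $\mathrm{Pre}^*(C)$ is the set of configurations from which $C$ is reachable in $\mathcal{M}_\mathcal{A}$. $\mathrm{Post}^*(C)$ is the set of configurations reachable from $C$. *)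

theory Defs
  imports Complex_Main
begin

text \<open>A probabilistic one-counter automaton (pOC). Rules are triples (p, c, q) with
  counter change c. Configurations are pairs (state, counter value).\<close>

record 'q poc =
  states :: "'q set"
  delta_zero :: "('q \<times> int \<times> 'q) set"
  delta_pos :: "('q \<times> int \<times> 'q) set"
  P_zero :: "('q \<times> int \<times> 'q) \<Rightarrow> real"
  P_pos :: "('q \<times> int \<times> 'q) \<Rightarrow> real"

definition out_rules :: "('q \<times> int \<times> 'q) set \<Rightarrow> 'q \<Rightarrow> ('q \<times> int \<times> 'q) set" where
  "out_rules \<delta> p = {r \<in> \<delta>. fst r = p}"

definition valid_poc :: "'q poc \<Rightarrow> bool" where
  "valid_poc A \<longleftrightarrow>
     finite (states A) \<and>
     delta_zero A \<subseteq> states A \<times> {0, 1} \<times> states A \<and>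
     delta_pos A \<subseteq> states A \<times> {-1, 0, 1} \<times> states A \<and>
     (\<forall>p \<in> states A. out_rules (delta_zero A) p \<noteq> {} \<and> out_rules (delta_pos A) p \<noteq> {}) \<and>
     (\<forall>r \<in> delta_zero A. P_zero A r > 0) \<and>
     (\<forall>r \<in> delta_pos A. P_pos A r > 0) \<and>
     (\<forall>p \<in> states A. (\<Sum>r \<in> out_rules (delta_zero A) p. P_zero A r) = 1) \<and>
     (\<forall>p \<in> states A. (\<Sum>r \<in> out_rules (delta_pos A) p. P_pos A r) = 1)"

type_synonym 'q config = "'q \<times> nat"

definition configs :: "'q poc \<Rightarrow> 'q config set" where
  "configs A = states A \<times> UNIV"

definition step :: "'q poc \<Rightarrow> 'q config \<Rightarrow> 'q config \<Rightarrow> bool" where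
  "step A x y \<longleftrightarrow>
     (case x of (p, i) \<Rightarrow> case y of (q, j) \<Rightarrow>
        (i = 0 \<and> (p, int j, q) \<in> delta_zero A) \<or>
        (i \<ge> 1 \<and> (p, int j - int i, q) \<in> delta_pos A))"

definition Post_star :: "'q poc \<Rightarrow> 'q config set \<Rightarrow> 'q config set" where
  "Post_star A C = {y. \<exists>x \<in> C. (step A)\<^sup>*\<^sup>* x y}"

definition Pre_star :: "'q poc \<Rightarrow> 'q config set \<Rightarrow> 'q config set" where
  "Pre_star A C = {x. \<exists>y \<in> C. (step A)\<^sup>*\<^sup>* x y}"

end

theory Submission
  imports Defs
begin

text \<open>Every configuration r(k) of Pre*(q(0)) \<inter> Post*(p(1)) has k \<le> |Q|^2; the bound
  then follows from |Q| (|Q|^2 + 1) \<le> |Q|^2 (|Q| + 2). Suppose k > |Q|^2. On a run from p(1)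
  to r(k) let a_j(j) be the last visit of level j, and on a run from r(k) to q(0) let b_j(j) be
  the first one; between these points the runs never go below level j. Two levels j < j' carry
  the same pair (a, b), so the segments a(j) \<rightarrow> a(j') and b(j') \<rightarrow> b(j) stay at positive counter
  values and can be repeated arbitrarily often, shifted upwards. All configurations
  a(j + m(j' - j)) then lie in the set, which is therefore infinite.\<close>

definition run_above :: "('s \<times> nat \<Rightarrow> 's \<times> nat \<Rightarrow> bool) \<Rightarrow> nat \<Rightarrow> 's \<times> nat \<Rightarrow> 's \<times> nat \<Rightarrow> bool" where
  "run_above R j = (\<lambda>u v. R u v \<and> j \<le> snd u \<and> j \<le> snd v)\<^sup>*\<^sup>*"

lemma run_above_refl [simp]: "run_above R j u u"
  by (simp add: run_above_def)

lemma run_above_snoc: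
  "run_above R j u v \<Longrightarrow> R v w \<Longrightarrow> j \<le> snd v \<Longrightarrow> j \<le> snd w \<Longrightarrow> run_above R j u w"
  unfolding run_above_def by (rule rtranclp.rtrancl_into_rtrancl) auto

lemma run_above_trans: "run_above R j u v \<Longrightarrow> run_above R j v w \<Longrightarrow> run_above R j u w"
  unfolding run_above_def by (rule rtranclp_trans)

lemma run_above_imp_rtranclp: "run_above R j u v \<Longrightarrow> R\<^sup>*\<^sup>* u v"
  unfolding run_above_def by (induction rule: rtranclp_induct) (auto intro: rtranclp.rtrancl_into_rtrancl)

lemma run_above_conversep: "run_above R\<inverse>\<inverse> j u v = run_above R j v u"
proof -
  have "(\<lambda>u v. R\<inverse>\<inverse> u v \<and> j \<le> snd u \<and> j \<le> snd v) = (\<lambda>u v. R u v \<and> j \<le> snd u \<and> j \<le> snd v)\<inverse>\<inverse>"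
    by auto
  then show ?thesis
    unfolding run_above_def by (simp add: rtranclp_conversep)
qed

definition shift_invariant_from :: "nat \<Rightarrow> ('s \<times> nat \<Rightarrow> 's \<times> nat \<Rightarrow> bool) \<Rightarrow> bool" where
  "shift_invariant_from l R \<longleftrightarrow>
     (\<forall>s i t i' d. l \<le> i \<longrightarrow> R (s, i) (t, i') \<longrightarrow> R (s, i + d) (t, i' + d))"

lemma run_above_shift:
  assumes shift: "shift_invariant_from l R"
    and "l \<le> j" and "run_above R j u v"
  shows "run_above R (j + d) (fst u, snd u + d) (fst v, snd v + d)"
  using assms(3) unfolding run_above_def
proof (induction rule: rtranclp_induct)
  case (step v w)
  then have "R (fst v, snd v + d) (fst w, snd w + d)"
    using shift \<open>l \<le> j\<close> by (auto simp: shift_invariant_from_def)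
  with step show ?case
    by (auto intro: rtranclp.rtrancl_into_rtrancl)
qed simp

text \<open>In a ladder, (a j, j) plays the role of the last visit of level j on a run from x to y.\<close>

definition ladder :: "('s \<times> nat \<Rightarrow> 's \<times> nat \<Rightarrow> bool) \<Rightarrow> 's \<times> nat \<Rightarrow> 's \<times> nat \<Rightarrow> (nat \<Rightarrow> 's) \<Rightarrow> bool" where
  "ladder R x y a \<longleftrightarrow>
     (\<forall>j. snd x \<le> j \<longrightarrow> j \<le> snd y \<longrightarrow>
        R\<^sup>*\<^sup>* x (a j, j) \<and> run_above R j (a j, j) y \<and>
        (\<forall>j'. j \<le> j' \<longrightarrow> j' \<le> snd y \<longrightarrow> run_above R j (a j, j) (a j', j')))"

lemma ladder_step_down:
  assumes "ladder R x y a" and "R y z" and "snd z \<le> snd y"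
  shows "ladder R x z a"
  unfolding ladder_def
proof (intro allI impI conjI)
  fix j j' assume j: "snd x \<le> j" "j \<le> snd z"
  then have "j \<le> snd y" using assms(3) by simp
  with assms(1) j(1) have old: "R\<^sup>*\<^sup>* x (a j, j)" "run_above R j (a j, j) y"
    "\<forall>j'. j \<le> j' \<longrightarrow> j' \<le> snd y \<longrightarrow> run_above R j (a j, j) (a j', j')"
    by (auto simp: ladder_def)
  show "R\<^sup>*\<^sup>* x (a j, j)" by (rule old(1))
  show "run_above R j (a j, j) z"
    using old(2) assms(2) \<open>j \<le> snd y\<close> j(2) by (rule run_above_snoc)
  assume "j \<le> j'" "j' \<le> snd z"
  then show "run_above R j (a j, j) (a j', j')"
    using old(3) assms(3) by simp
qed

lemma ladder_step_up:
  assumes "ladder R x y a" and "R\<^sup>*\<^sup>* x y" and "R y z" and "snd z = Suc (snd y)"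
  shows "ladder R x z (a(snd z := fst z))"
  unfolding ladder_def
proof (intro allI impI conjI)
  fix j j' assume j: "snd x \<le> j" "j \<le> snd z"
  have old: "R\<^sup>*\<^sup>* x (a j, j) \<and> run_above R j (a j, j) z" if "j \<le> snd y"
  proof
    show "R\<^sup>*\<^sup>* x (a j, j)" using assms(1) that j(1) by (simp add: ladder_def)
    have "run_above R j (a j, j) y" using assms(1) that j(1) by (simp add: ladder_def)
    then show "run_above R j (a j, j) z"
      using assms(3) that j(2) by (rule run_above_snoc)
  qed
  have xz: "R\<^sup>*\<^sup>* x z"
    using assms(2,3) by (rule rtranclp.rtrancl_into_rtrancl)
  have new: "R\<^sup>*\<^sup>* x ((a(snd z := fst z)) j, j) \<and> run_above R j ((a(snd z := fst z)) j, j) z"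
  proof (cases "j = snd z")
    case True
    then show ?thesis using xz by simp
  next
    case False
    then show ?thesis using old assms(4) j(2) by simp
  qed
  then show "R\<^sup>*\<^sup>* x ((a(snd z := fst z)) j, j)" "run_above R j ((a(snd z := fst z)) j, j) z"
    by blast+
  assume j': "j \<le> j'" "j' \<le> snd z"
  show "run_above R j ((a(snd z := fst z)) j, j) ((a(snd z := fst z)) j', j')"
  proof (cases "j' = snd z")
    case True
    then show ?thesis using new by simp
  next
    case False
    then have "j \<noteq> snd z" "j' \<le> snd y" using j' assms(4) by auto
    then show ?thesis
      using assms(1) j j' False by (simp add: ladder_def)
  qed
qed

lemma ladder_exists:
  assumes up: "\<And>u v. R u v \<Longrightarrow> snd v \<le> Suc (snd u)" and "R\<^sup>*\<^sup>* x y"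
  shows "\<exists>a. ladder R x y a"
  using assms(2)
proof (induction rule: rtranclp_induct)
  case base
  have "ladder R x x (\<lambda>_. fst x)"
    by (auto simp: ladder_def)
  then show ?case by blast
next
  case (step y z)
  then obtain a where "ladder R x y a" by blast
  show ?case
  proof (cases "snd z \<le> snd y")
    case True
    then show ?thesis using ladder_step_down \<open>ladder R x y a\<close> step(2) by blast
  next
    case False
    then have "snd z = Suc (snd y)" using up[OF step(2)] by simp
    then show ?thesis using ladder_step_up \<open>ladder R x y a\<close> step(1,2) by blast
  qed
qed

text \<open>First visits on a run from y down to x are the last visits of the reversed run.\<close>

lemma first_visits_exist:
  assumes down: "\<And>u v. R u v \<Longrightarrow> snd u \<le> Suc (snd v)" and "R\<^sup>*\<^sup>* y x"
  shows "\<exists>b. \<forall>j. snd x \<le> j \<longrightarrow> j \<le> snd y \<longrightarrow>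
           R\<^sup>*\<^sup>* (b j, j) x \<and> run_above R j y (b j, j) \<and>
           (\<forall>j'. j \<le> j' \<longrightarrow> j' \<le> snd y \<longrightarrow> run_above R j (b j', j') (b j, j))"
proof -
  have "R\<inverse>\<inverse>\<^sup>*\<^sup>* x y"
    using assms(2) by (simp add: rtranclp_conversep)
  moreover have "snd v \<le> Suc (snd u)" if "R\<inverse>\<inverse> u v" for u v
    using down that by simp
  ultimately obtain b where "ladder R\<inverse>\<inverse> x y b"
    using ladder_exists by blast
  then show ?thesis
    by (auto simp: ladder_def run_above_conversep rtranclp_conversep)
qed

lemma rtranclp_pump_up:
  assumes shift: "shift_invariant_from l R"
    and "l \<le> j" and "run_above R j (s, j) (s, j + d)"
  shows "R\<^sup>*\<^sup>* (s, j) (s, j + m * d)"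
proof (induction m)
  case (Suc m)
  have "run_above R (j + m * d) (s, j + m * d) (s, j + Suc m * d)"
    using run_above_shift[OF shift assms(2,3), of "m * d"] by (simp add: algebra_simps)
  with Suc show ?case
    by (blast intro: rtranclp_trans run_above_imp_rtranclp)
qed simp

lemma rtranclp_pump_down:
  assumes shift: "shift_invariant_from l R"
    and "l \<le> j" and "run_above R j (s, j + d) (s, j)"
  shows "R\<^sup>*\<^sup>* (s, j + m * d) (s, j)"
proof (induction m)
  case (Suc m)
  have "run_above R (j + m * d) (s, j + Suc m * d) (s, j + m * d)"
    using run_above_shift[OF shift assms(2,3), of "m * d"] by (simp add: algebra_simps)
  with Suc show ?case
    by (blast intro: rtranclp_trans run_above_imp_rtranclp)
qed simp

lemma infinite_between_if_loops:
  assumes shift: "shift_invariant_from l R"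
    and "l \<le> j" and "j < j'"
    and loop_a: "run_above R j (a, j) (a, j')"
    and loop_b: "run_above R j (b, j') (b, j)"
    and cross: "run_above R j (a, j) (b, j)"
    and "R\<^sup>*\<^sup>* c\<^sub>0 (a, j)" and "R\<^sup>*\<^sup>* (b, j) c\<^sub>1"
  shows "infinite {c. R\<^sup>*\<^sup>* c\<^sub>0 c \<and> R\<^sup>*\<^sup>* c c\<^sub>1}"
proof -
  define d where "d = j' - j"
  have j': "j' = j + d" and "d > 0"
    using \<open>j < j'\<close> by (auto simp: d_def)
  have "R\<^sup>*\<^sup>* c\<^sub>0 (a, j + m * d) \<and> R\<^sup>*\<^sup>* (a, j + m * d) c\<^sub>1" for m
  proof
    show "R\<^sup>*\<^sup>* c\<^sub>0 (a, j + m * d)"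
      using assms(7) rtranclp_pump_up[OF shift \<open>l \<le> j\<close>] loop_a j' by (blast intro: rtranclp_trans)
    have "R\<^sup>*\<^sup>* (a, j + m * d) (b, j + m * d)"
      using run_above_imp_rtranclp[OF run_above_shift[OF shift \<open>l \<le> j\<close> cross]] by simp
    then show "R\<^sup>*\<^sup>* (a, j + m * d) c\<^sub>1"
      using assms(8) rtranclp_pump_down[OF shift \<open>l \<le> j\<close>] loop_b j' by (blast intro: rtranclp_trans)
  qed
  then have "range (\<lambda>m. (a, j + m * d)) \<subseteq> {c. R\<^sup>*\<^sup>* c\<^sub>0 c \<and> R\<^sup>*\<^sup>* c c\<^sub>1}"
    by auto
  moreover have "infinite (range (\<lambda>m. (a, j + m * d)))"
    using \<open>d > 0\<close> by (auto simp: inj_def dest: finite_imageD)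
  ultimately show ?thesis
    using finite_subset by blast
qed

lemma step_level_bounds:
  assumes "valid_poc A" and "step A x y"
  shows "snd y \<le> Suc (snd x)" "snd x \<le> Suc (snd y)" "fst y \<in> states A"
proof -
  have "delta_zero A \<subseteq> states A \<times> {0, 1} \<times> states A"
    "delta_pos A \<subseteq> states A \<times> {-1, 0, 1} \<times> states A"
    using assms(1) by (auto simp: valid_poc_def)
  then show "snd y \<le> Suc (snd x)" "snd x \<le> Suc (snd y)" "fst y \<in> states A"
    using assms(2) by (auto simp: step_def split: prod.splits)
qed

lemma rtranclp_step_states:
  assumes "valid_poc A" and "(step A)\<^sup>*\<^sup>* x y" and "fst x \<in> states A"
  shows "fst y \<in> states A"
  using assms(2,3) by (induction rule: rtranclp_induct) (use step_level_bounds[OF assms(1)] in auto)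

lemma shift_invariant_from_step: "shift_invariant_from 1 (step A)"
  by (auto simp: shift_invariant_from_def step_def)

lemma Pre_star_Int_Post_star:
  "Pre_star A {y} \<inter> Post_star A {x} = {c. (step A)\<^sup>*\<^sup>* x c \<and> (step A)\<^sup>*\<^sup>* c y}"
  by (auto simp: Pre_star_def Post_star_def)

lemma pigeonhole_pairs:
  assumes "finite S" and "card S ^ 2 < k" and "\<And>j. j \<in> {1..k} \<Longrightarrow> a j \<in> S \<and> b j \<in> S"
  obtains j j' where "j \<in> {1..k}" "j' \<in> {1..k}" "j < j'" "a j' = a j" "b j' = b j"
proof -
  have "(\<lambda>j. (a j, b j)) ` {1..k} \<subseteq> S \<times> S"
    using assms(3) by auto
  moreover have "card (S \<times> S) < card {1..k}"
    using assms(2) by (simp add: card_cartesian_product power2_eq_square)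
  ultimately have "\<not> inj_on (\<lambda>j. (a j, b j)) {1..k}"
    using card_inj_on_le \<open>finite S\<close> by (metis finite_SigmaI not_le)
  then obtain i i' where "i \<in> {1..k}" "i' \<in> {1..k}" "i \<noteq> i'" "a i = a i'" "b i = b i'"
    unfolding inj_on_def by auto
  then show ?thesis
    using that by (cases i i' rule: linorder_cases) auto
qed

lemma counter_le_if_finite_between:
  assumes valid: "valid_poc A" and "p \<in> states A"
    and fin: "finite {c. (step A)\<^sup>*\<^sup>* (p, 1) c \<and> (step A)\<^sup>*\<^sup>* c (q, 0)}"
    and pr: "(step A)\<^sup>*\<^sup>* (p, 1) (r, k)" and rq: "(step A)\<^sup>*\<^sup>* (r, k) (q, 0)"
  shows "k \<le> card (states A) ^ 2"
proof (rule ccontr)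
  assume "\<not> k \<le> card (states A) ^ 2"
  obtain a where "ladder (step A) (p, 1) (r, k) a"
    using ladder_exists[OF _ pr] step_level_bounds[OF valid] by blast
  then have a: "(step A)\<^sup>*\<^sup>* (p, 1) (a j, j) \<and> run_above (step A) j (a j, j) (r, k) \<and>
      (\<forall>j'. j \<le> j' \<longrightarrow> j' \<le> k \<longrightarrow> run_above (step A) j (a j, j) (a j', j'))"
    if "j \<in> {1..k}" for j
    using that by (simp add: ladder_def)
  have "snd u \<le> Suc (snd v)" if "step A u v" for u v
    using step_level_bounds[OF valid that] by simp
  then obtain b where "\<forall>j. snd (q, 0) \<le> j \<longrightarrow> j \<le> snd (r, k) \<longrightarrow>
      (step A)\<^sup>*\<^sup>* (b j, j) (q, 0) \<and> run_above (step A) j (r, k) (b j, j) \<and>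
      (\<forall>j'. j \<le> j' \<longrightarrow> j' \<le> snd (r, k) \<longrightarrow> run_above (step A) j (b j', j') (b j, j))"
    using first_visits_exist[OF _ rq] by blast
  then have b: "(step A)\<^sup>*\<^sup>* (b j, j) (q, 0) \<and> run_above (step A) j (r, k) (b j, j) \<and>
      (\<forall>j'. j \<le> j' \<longrightarrow> j' \<le> k \<longrightarrow> run_above (step A) j (b j', j') (b j, j))"
    if "j \<in> {1..k}" for j
    using that by simp
  have r: "r \<in> states A"
    using rtranclp_step_states[OF valid pr] \<open>p \<in> states A\<close> by simp
  have ab: "a j \<in> states A \<and> b j \<in> states A" if "j \<in> {1..k}" for j
    using rtranclp_step_states[OF valid, of "(p, 1)" "(a j, j)"]
      rtranclp_step_states[OF valid run_above_imp_rtranclp, of j "(r, k)" "(b j, j)"]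
      a[OF that] b[OF that] r \<open>p \<in> states A\<close> by auto
  moreover have "finite (states A)" "card (states A) ^ 2 < k"
    using valid \<open>\<not> k \<le> card (states A) ^ 2\<close> by (simp_all add: valid_poc_def)
  ultimately obtain j j' where j: "j \<in> {1..k}" "j' \<in> {1..k}" "j < j'" "a j' = a j" "b j' = b j"
    using pigeonhole_pairs by blast
  have "infinite {c. (step A)\<^sup>*\<^sup>* (p, 1) c \<and> (step A)\<^sup>*\<^sup>* c (q, 0)}"
  proof (rule infinite_between_if_loops[OF shift_invariant_from_step])
    show "1 \<le> j" "j < j'" using j by auto
    have "run_above (step A) j (a j, j) (a j', j')" "run_above (step A) j (b j', j') (b j, j)"
      using a[OF j(1)] b[OF j(1)] j(2,3) by auto
    then show "run_above (step A) j (a j, j) (a j, j')" "run_above (step A) j (b j, j') (b j, j)"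
      using j(4,5) by simp_all
    show "run_above (step A) j (a j, j) (b j, j)"
      using a[OF j(1)] b[OF j(1)] by (blast intro: run_above_trans)
    show "(step A)\<^sup>*\<^sup>* (p, 1) (a j, j)" "(step A)\<^sup>*\<^sup>* (b j, j) (q, 0)"
      using a[OF j(1)] b[OF j(1)] by auto
  qed
  with fin show False by contradiction
qed

theorem mainTheorem6:
  fixes A :: "'q poc" and p q :: 'q
  assumes "valid_poc A"
    and "p \<in> states A" and "q \<in> states A"
    and "finite (Pre_star A {(q, 0)} \<inter> Post_star A {(p, 1)})"
  shows "card (Pre_star A {(q, 0)} \<inter> Post_star A {(p, 1)})
           \<le> card (states A) ^ 2 * (card (states A) + 2)"
proof -
  let ?S = "Pre_star A {(q, 0)} \<inter> Post_star A {(p, 1)}"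
  let ?n = "card (states A)"
  have "finite (states A)"
    using assms(1) by (simp add: valid_poc_def)
  have "?S \<subseteq> states A \<times> {0..?n ^ 2}"
    using assms counter_le_if_finite_between[OF assms(1,2)] rtranclp_step_states[OF assms(1)]
    unfolding Pre_star_Int_Post_star by fastforce
  then have "card ?S \<le> ?n * (?n ^ 2 + 1)"
    using card_mono[of "states A \<times> {0..?n ^ 2}"] \<open>finite (states A)\<close>
    by (simp add: card_cartesian_product)
  also have "\<dots> \<le> ?n ^ 2 * (?n + 2)"
    using \<open>p \<in> states A\<close> \<open>finite (states A)\<close> card_gt_0_iff[of "states A"]
    by (cases ?n) (auto simp: power2_eq_square algebra_simps)
  finally show ?thesis .
qed

end
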